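(* For $0<\lambda<1$ let $Z(\lambda):=\big\{\frac{1-\lambda^j}{1+\lambda^j}:j=1,2,\dots\big\}$. Then \[ \delta(Z(\lambda))\ge e^{-(\pi^2/2)/(1-\lambda)}. \]
   Context: For a sequence $Z=(z_j)$ in $\mathbb{D}$, $\delta(Z):=\inf_j\prod_{k\ne j}\varrho(z_j,z_k)$, where $\varrho(z,w)=\big|\frac{z-w}{1-\bar wz}\big|$ is the pseudohyperbolic distance. *)

theory Defs
  imports Complex_Main
begin

definition pdist :: "complex \<Rightarrow> complex \<Rightarrow> real" where
  "pdist z w = cmod ((z - w) / (1 - cnj w * z))"

text \<open>The infinite product over k different from j of pdist (z j) (z k), taken as the
  limit of its partial products (the factors lie in [0,1], so the partial products are
  non-increasing and the limit exists, possibly 0).\<close>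
definition sep_prod :: "(nat \<Rightarrow> complex) \<Rightarrow> nat \<Rightarrow> real" where
  "sep_prod z j = lim (\<lambda>n. \<Prod>k\<in>{..<n} - {j}. pdist (z j) (z k))"

definition sep_const :: "(nat \<Rightarrow> complex) \<Rightarrow> real" where
  "sep_const z = (INF j. sep_prod z j)"

end

theory Submission
  imports Defs "HOL-Analysis.Analysis"
begin

text \<open>Write \<open>cayley t = (1 - t) / (1 + t)\<close>, so that the j-th point of \<open>Z(\<lambda>)\<close> is
  \<open>cayley (\<lambda>^(j+1))\<close>. Since the pseudohyperbolic distance between \<open>cayley a\<close> and
  \<open>cayley b\<close> is \<open>|b - a| / (a + b)\<close>, the distance between the j-th and k-th points is
  \<open>cayley (\<lambda>^|j - k|)\<close>. Hence each of the two halves k < j and k > j of the product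
  defining \<open>\<delta>\<close> is bounded below by \<open>\<Prod>m\<ge>1. cayley (\<lambda>^m)\<close>. Expanding
  \<open>-ln (cayley t) = 2 artanh t = \<Sum>n. 2 t^(2n+1) / (2n+1)\<close> and summing the geometric
  series in m, the logarithm of that product is at least
  \<open>-\<Sum>n. 2 / ((1 - \<lambda>) (2n+1)^2) = -(\<pi>^2/4) / (1 - \<lambda>)\<close>.\<close>

definition cayley :: "real \<Rightarrow> real" where
  "cayley t = (1 - t) / (1 + t)"

lemma cayley_nonneg: "0 \<le> t \<Longrightarrow> t \<le> 1 \<Longrightarrow> 0 \<le> cayley t"
  by (simp add: cayley_def)

lemma cayley_pos: "0 \<le> t \<Longrightarrow> t < 1 \<Longrightarrow> 0 < cayley t"
  by (simp add: cayley_def)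

lemma cayley_le_one: "0 \<le> t \<Longrightarrow> cayley t \<le> 1"
  by (simp add: cayley_def)

lemma pdist_commute: "pdist z w = pdist w z"
proof -
  have "cmod (1 - cnj w * z) = cmod (1 - cnj z * w)"
    by (metis complex_cnj_cnj complex_cnj_diff complex_cnj_mult complex_cnj_one
        complex_mod_cnj mult.commute)
  then show ?thesis
    by (simp add: pdist_def norm_divide norm_minus_commute)
qed

lemma pdist_cayley_mult:
  assumes "0 < a" "0 < t" "t \<le> 1"
  shows "pdist (of_real (cayley a)) (of_real (cayley (a * t))) = cayley t"
proof -
  have pos: "0 < 1 + a" "0 < 1 + a * t" "0 < 1 + t"
    using assms by (auto intro: add_pos_pos)
  have "cayley a - cayley (a * t) = 2 * a * (t - 1) / ((1 + a) * (1 + a * t))"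
    using pos by (simp add: cayley_def field_simps)
  moreover have "1 - cayley (a * t) * cayley a = 2 * a * (1 + t) / ((1 + a) * (1 + a * t))"
    using pos by (simp add: cayley_def divide_simps) (simp add: algebra_simps)
  ultimately have "(cayley a - cayley (a * t)) / (1 - cayley (a * t) * cayley a) = - cayley t"
    using assms pos by (simp add: cayley_def divide_simps)
  then have "pdist (of_real (cayley a)) (of_real (cayley (a * t))) = \<bar>- cayley t\<bar>"
    unfolding pdist_def by (metis complex_cnj_complex_of_real norm_of_real of_real_diff
        of_real_divide of_real_mult of_real_1)
  then show ?thesis
    using assms by (simp add: cayley_nonneg)
qed

lemma pdist_cayley_power:
  fixes l :: real
  assumes "0 < l" "l \<le> 1" "j \<le> k"
  shows "pdist (of_real (cayley (l ^ j))) (of_real (cayley (l ^ k))) = cayley (l ^ (k - j))"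
proof -
  have "l ^ k = l ^ j * l ^ (k - j)"
    using assms(3) by (simp flip: power_add)
  then show ?thesis
    using assms by (simp add: pdist_cayley_mult power_le_one)
qed

lemma odd_inverse_squares_sums: "(\<lambda>n. 1 / (2 * real n + 1)\<^sup>2) sums (pi\<^sup>2 / 8)"
proof -
  have pairs: "(\<lambda>n. \<Sum>i\<in>{n * 2..<n * 2 + 2}. 1 / (real i + 1)\<^sup>2) sums (pi\<^sup>2 / 6)"
    using sums_group[OF inverse_squares_sums, of 2] by (simp add: ac_simps)
  have evens: "(\<lambda>n. 1 / 4 * (1 / (real n + 1)\<^sup>2)) sums (1 / 4 * (pi\<^sup>2 / 6))"
    using sums_mult[OF inverse_squares_sums, of "1 / 4"] by (simp add: ac_simps)
  have "(\<Sum>i\<in>{n * 2..<n * 2 + 2}. 1 / (real i + 1)\<^sup>2) - 1 / 4 * (1 / (real n + 1)\<^sup>2)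
      = 1 / (2 * real n + 1)\<^sup>2" for n
  proof -
    have "{n * 2..<n * 2 + 2} = {n * 2, n * 2 + 1}" by auto
    then show ?thesis by (simp add: field_simps power2_eq_square)
  qed
  then show ?thesis
    using sums_diff[OF pairs evens] by simp
qed

lemma sum_power_le_geometric:
  fixes q :: real
  assumes "0 \<le> q" "q < 1"
  shows "(\<Sum>m\<in>{1..N}. q ^ m) \<le> q / (1 - q)"
proof -
  have "(\<Sum>m\<in>{1..N}. q ^ m) = q * (\<Sum>m<N. q ^ m)"
    unfolding image_Suc_lessThan[symmetric] by (simp add: sum.reindex sum_distrib_left)
  also have "\<dots> \<le> q * (\<Sum>m. q ^ m)"
    using assms by (intro mult_left_mono sum_le_suminf summable_geometric) auto
  also have "\<dots> = q / (1 - q)"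
    using assms by (simp add: suminf_geometric)
  finally show ?thesis .
qed

lemma power_div_one_minus_power_le:
  fixes l :: real
  assumes "0 < l" "l < 1" "0 < k"
  shows "l ^ k / (1 - l ^ k) \<le> 1 / (real k * (1 - l))"
proof -
  have "real k * l ^ k = (\<Sum>i<k. l ^ k)" by simp
  also have "\<dots> \<le> (\<Sum>i<k. l ^ i)"
    using assms by (intro sum_mono power_decreasing) auto
  finally have "real k * l ^ k * (1 - l) \<le> (\<Sum>i<k. l ^ i) * (1 - l)"
    using assms by (intro mult_right_mono) auto
  also have "\<dots> = 1 - l ^ k"
    by (simp add: sum_gp_strict)
  finally show ?thesis
    using assms by (simp add: field_simps power_less_one_iff)
qed

lemma minus_ln_cayley_sums:
  fixes t :: real
  assumes "\<bar>t\<bar> < 1"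
  shows "(\<lambda>n. 2 * t ^ (2 * n + 1) / real (2 * n + 1)) sums (- ln (cayley t))"
proof -
  have pos: "0 < cayley t"
    using assms by (simp add: cayley_def)
  have "(cayley t - 1) / (cayley t + 1) = - t"
    using assms by (simp add: cayley_def field_simps)
  then have "(\<lambda>n. - (2 * t ^ (2 * n + 1) / real (2 * n + 1))) sums ln (cayley t)"
    using ln_series_quadratic[OF pos] by (simp add: power_minus_odd)
  then show ?thesis
    using sums_minus by fastforce
qed

lemma sum_odd_power_terms_le:
  fixes l :: real
  assumes l: "0 < l" "l < 1"
  shows "(\<Sum>m\<in>{1..N}. 2 * (l ^ m) ^ (2 * n + 1) / real (2 * n + 1))
           \<le> 2 / (1 - l) * (1 / (2 * real n + 1)\<^sup>2)"
proof -
  define k where "k = 2 * n + 1"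
  have k: "0 < k" by (simp add: k_def)
  have lk: "0 \<le> l ^ k" "l ^ k < 1"
    using l k by (auto simp: power_less_one_iff)
  have "(\<Sum>m\<in>{1..N}. 2 * (l ^ m) ^ k / real k) = 2 / real k * (\<Sum>m\<in>{1..N}. (l ^ k) ^ m)"
    by (simp add: sum_distrib_left mult.commute flip: power_mult)
  also have "\<dots> \<le> 2 / real k * (l ^ k / (1 - l ^ k))"
    using lk by (intro mult_left_mono sum_power_le_geometric) auto
  also have "\<dots> \<le> 2 / real k * (1 / (real k * (1 - l)))"
    using power_div_one_minus_power_le[OF l k] by (intro mult_left_mono) auto
  also have "\<dots> = 2 / (1 - l) * (1 / (2 * real n + 1)\<^sup>2)"
    by (simp add: k_def power2_eq_square add.commute)
  finally show ?thesis
    unfolding k_def .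
qed

lemma sum_minus_ln_cayley_power_le:
  fixes l :: real
  assumes l: "0 < l" "l < 1"
  shows "(\<Sum>m\<in>{1..N}. - ln (cayley (l ^ m))) \<le> (pi\<^sup>2 / 4) / (1 - l)"
proof -
  have "(\<lambda>n. \<Sum>m\<in>{1..N}. 2 * (l ^ m) ^ (2 * n + 1) / real (2 * n + 1))
      sums (\<Sum>m\<in>{1..N}. - ln (cayley (l ^ m)))"
    using l by (intro sums_sum minus_ln_cayley_sums) (simp add: power_less_one_iff)
  moreover have "(\<lambda>n. 2 / (1 - l) * (1 / (2 * real n + 1)\<^sup>2)) sums (2 / (1 - l) * (pi\<^sup>2 / 8))"
    by (rule sums_mult[OF odd_inverse_squares_sums])
  ultimately have "(\<Sum>m\<in>{1..N}. - ln (cayley (l ^ m))) \<le> 2 / (1 - l) * (pi\<^sup>2 / 8)"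
    by (rule sums_le[OF sum_odd_power_terms_le[OF l]])
  then show ?thesis
    using l by (simp add: field_simps)
qed

lemma prod_superset_le:
  fixes f :: "'a \<Rightarrow> 'b::linordered_idom"
  assumes "finite B" "A \<subseteq> B" "\<And>b. b \<in> B \<Longrightarrow> 0 \<le> f b \<and> f b \<le> 1"
  shows "prod f B \<le> prod f A"
proof -
  have "prod f B = prod f (B - A) * prod f A"
    by (rule prod.subset_diff[OF assms(2,1)])
  also have "\<dots> \<le> prod f A"
    using assms by (intro mult_left_le_one_le prod_nonneg prod_le_1) auto
  finally show ?thesis .
qed

lemma prod_cayley_power_ge:
  fixes l :: real
  assumes l: "0 < l" "l < 1" and M: "finite M" "0 \<notin> M"
  shows "exp (- (pi\<^sup>2 / 4) / (1 - l)) \<le> (\<Prod>m\<in>M. cayley (l ^ m))"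
proof -
  obtain N where "M \<subseteq> {..<N}"
    using finite_nat_bounded[OF M(1)] by blast
  with M(2) have sub: "M \<subseteq> {1..N}"
    by (auto simp: subset_eq Suc_le_eq intro: gr0I)
  have pos: "0 < cayley (l ^ m)" if "0 < m" for m
    using l that by (simp add: cayley_pos power_less_one_iff)
  have "- (pi\<^sup>2 / 4) / (1 - l) \<le> (\<Sum>m\<in>{1..N}. ln (cayley (l ^ m)))"
    using sum_minus_ln_cayley_power_le[OF l, of N] by (simp add: sum_negf)
  also have "\<dots> = ln (\<Prod>m\<in>{1..N}. cayley (l ^ m))"
    by (subst ln_prod) (auto simp: Suc_le_eq dest: pos)
  finally have "exp (- (pi\<^sup>2 / 4) / (1 - l)) \<le> (\<Prod>m\<in>{1..N}. cayley (l ^ m))"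
    using pos by (metis exp_le_cancel_iff exp_ln prod_pos atLeastAtMost_iff Suc_le_eq One_nat_def)
  also have "\<dots> \<le> (\<Prod>m\<in>M. cayley (l ^ m))"
    using l sub by (intro prod_superset_le) (auto simp: cayley_nonneg cayley_le_one power_le_one)
  finally show ?thesis .
qed

lemma sep_prod_ge:
  assumes "\<And>k. pdist (z j) (z k) \<le> 1"
    and "\<And>n. c \<le> (\<Prod>k\<in>{..<n} - {j}. pdist (z j) (z k))"
  shows "c \<le> sep_prod z j"
proof -
  define P where "P = (\<lambda>n. \<Prod>k\<in>{..<n} - {j}. pdist (z j) (z k))"
  have "P (Suc n) \<le> P n" for n
  proof (cases "n = j")
    case True
    then have "{..<Suc n} - {j} = {..<n} - {j}" by auto
    then show ?thesis by (simp add: P_def)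
  next
    case False
    then have "{..<Suc n} - {j} = insert n ({..<n} - {j})" by auto
    then have "P (Suc n) = pdist (z j) (z n) * P n" by (simp add: P_def)
    moreover have "0 \<le> P n"
      unfolding P_def by (intro prod_nonneg) (simp add: pdist_def)
    ultimately show ?thesis
      using assms(1)[of n] by (simp add: mult_left_le_one_le pdist_def)
  qed
  then obtain L where L: "P \<longlonglongrightarrow> L"
    using decseq_convergent[OF decseq_SucI] assms(2) unfolding P_def by metis
  then have "c \<le> L"
    using assms(2) unfolding P_def by (intro LIMSEQ_le_const) auto
  moreover have "sep_prod z j = L"
    using limI[OF L] by (simp add: sep_prod_def P_def)
  ultimately show ?thesis by simp
qed

lemma pdist_cayley_power_seq:
  fixes l :: real
  assumes l: "0 < l" "l < 1" and z: "\<And>j. z j = of_real (cayley (l ^ Suc j))"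
  shows pdist_cayley_power_seq_above: "j \<le> k \<Longrightarrow> pdist (z j) (z k) = cayley (l ^ (k - j))"
    and pdist_cayley_power_seq_below: "k \<le> j \<Longrightarrow> pdist (z j) (z k) = cayley (l ^ (j - k))"
proof -
  show "pdist (z j) (z k) = cayley (l ^ (k - j))" if "j \<le> k" for j k
    using pdist_cayley_power[of l "Suc j" "Suc k"] l that unfolding z by simp
  from this[of k j] show "k \<le> j \<Longrightarrow> pdist (z j) (z k) = cayley (l ^ (j - k))"
    by (simp add: pdist_commute)
qed

lemma partial_sep_prod_cayley_powers_ge:
  fixes l :: real
  assumes l: "0 < l" "l < 1" and z: "\<And>j. z j = of_real (cayley (l ^ Suc j))"
  shows "exp (- (pi\<^sup>2 / 2) / (1 - l)) \<le> (\<Prod>k\<in>{..<n} - {j}. pdist (z j) (z k))"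
proof -
  let ?c = "exp (- (pi\<^sup>2 / 4) / (1 - l))"
  let ?below = "{k. k < n \<and> k < j}" and ?above = "{k. k < n \<and> j < k}"
  have "(\<Prod>k\<in>?below. pdist (z j) (z k)) = (\<Prod>k\<in>?below. cayley (l ^ (j - k)))"
    using pdist_cayley_power_seq_below[OF l z] by simp
  also have "\<dots> = (\<Prod>m\<in>(\<lambda>k. j - k) ` ?below. cayley (l ^ m))"
    by (rule prod.reindex[symmetric, unfolded comp_def]) (auto simp: inj_on_def)
  also have "?c \<le> \<dots>"
    by (rule prod_cayley_power_ge[OF l]) auto
  finally have below: "?c \<le> (\<Prod>k\<in>?below. pdist (z j) (z k))" .
  have "(\<Prod>k\<in>?above. pdist (z j) (z k)) = (\<Prod>k\<in>?above. cayley (l ^ (k - j)))"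
    using pdist_cayley_power_seq_above[OF l z] by simp
  also have "\<dots> = (\<Prod>m\<in>(\<lambda>k. k - j) ` ?above. cayley (l ^ m))"
    by (rule prod.reindex[symmetric, unfolded comp_def]) (auto simp: inj_on_def)
  also have "?c \<le> \<dots>"
    by (rule prod_cayley_power_ge[OF l]) auto
  finally have above: "?c \<le> (\<Prod>k\<in>?above. pdist (z j) (z k))" .
  have split: "{..<n} - {j} = ?below \<union> ?above" by auto
  have "exp (- (pi\<^sup>2 / 2) / (1 - l)) = ?c * ?c"
    by (simp only: add_divide_distrib[symmetric] flip: exp_add) simp
  also have "\<dots> \<le> (\<Prod>k\<in>?below. pdist (z j) (z k)) * (\<Prod>k\<in>?above. pdist (z j) (z k))"
    using below above exp_ge_zero by (meson mult_mono order_trans)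
  also have "\<dots> = (\<Prod>k\<in>{..<n} - {j}. pdist (z j) (z k))"
    unfolding split by (rule prod.union_disjoint[symmetric]) auto
  finally show ?thesis .
qed

theorem lemma6p3:
  fixes l :: real
  assumes "0 < l" and "l < 1"
  shows "sep_const (\<lambda>j. complex_of_real ((1 - l ^ Suc j) / (1 + l ^ Suc j)))
           \<ge> exp (- (pi\<^sup>2 / 2) / (1 - l))"
proof -
  define z where "z = (\<lambda>j. complex_of_real (cayley (l ^ Suc j)))"
  have z: "z j = complex_of_real (cayley (l ^ Suc j))" for j
    by (simp add: z_def)
  have "exp (- (pi\<^sup>2 / 2) / (1 - l)) \<le> sep_prod z j" for j
  proof (rule sep_prod_ge)
    show "pdist (z j) (z k) \<le> 1" for k
      using assms
      by (cases "j \<le> k") (simp_all add: pdist_cayley_power_seq[OF assms z] cayley_le_one)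
    show "exp (- (pi\<^sup>2 / 2) / (1 - l)) \<le> (\<Prod>k\<in>{..<n} - {j}. pdist (z j) (z k))" for n
      using assms z by (rule partial_sep_prod_cayley_powers_ge)
  qed
  then have "exp (- (pi\<^sup>2 / 2) / (1 - l)) \<le> sep_const z"
    unfolding sep_const_def by (intro cINF_greatest) auto
  then show ?thesis
    unfolding z_def cayley_def .
qed

end
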